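(* Let $\mathbf{A}=(A_1,\ldots,A_n)$ be a POVM on $\mathbb{C}^2$. Then $\mathbf{A}$ is projective-simulable if and only if the pair $\{\mathbf{A},\bar{\mathbf{A}}\}$ is jointly measurable, where $\bar{\mathbf{A}}=(\bar A_1,\ldots,\bar A_n)$ with $\bar A_i=\mathrm{Tr}(A_i)\mathbb{I}-A_i$.
   Context: A POVM on $\mathbb{C}^d$ with $n$ outcomes is a tuple $\mathbf{A}=(A_1,\ldots,A_n)$ of positive semidefinite operators with $\sum_a A_a=\mathbb{I}$ (some effects may be zero); it is projective if all effects are projectors. Given a set $\mathcal{B}=\{\mathbf{B}^{(j)}\}_j$ of POVMs, a POVM $\mathbf{A}$ with $n$ outcomes is $\mathcal{B}$-simulable if there are a probability distribution $p(j)$ over (finitely many) elements of $\mathcal{B}$ and conditional probability distributions $q(i|j,i')$ (over $i\in\{1,\ldots,n\}$, for each $j$ and each outcome $i'$ of $\mathbf{B}^{(j)}$) such that $A_i=\sum_j p(j)\sum_{i'}q(i|j,i')B^{(j)}_{i'}$ for all $i$. $\mathbf{A}$ is projective-simulable if it is $\mathcal{B}$-simulable with $\mathcal{B}$ the set of all projective POVMs on $\mathbb{C}^d$. For a qubit operator $A=a\mathbb{I}+\vec v\cdot\vec\sigma$ ($\vec\sigma$ the Pauli matrices), the antipodal operator is $\bar A=a\mathbb{I}-\vec v\cdot\vec\sigma=\mathrm{Tr}(A)\mathbb{I}-A$. A pair of POVMs $\mathbf{A}$, $\mathbf{A}'$ is jointly measurable if there is a POVM $(M_{ab})$ with $\sum_b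 M_{ab}=A_a$ and $\sum_a M_{ab}=A'_b$ for all $a,b$. *)

theory Defs
  imports "HOL-Analysis.Analysis"
begin

type_synonym qop = "complex^2^2"

definition qform :: "qop \<Rightarrow> complex^2 \<Rightarrow> complex" where
  "qform A v = (\<Sum>i\<in>UNIV. \<Sum>j\<in>UNIV. cnj (v$i) * (A$i$j) * (v$j))"

text \<open>Positive semidefinite: v* A v is real and nonnegative for every v (this implies Hermitian).\<close>
definition psd :: "qop \<Rightarrow> bool" where
  "psd A \<longleftrightarrow> (\<forall>v. Im (qform A v) = 0 \<and> Re (qform A v) \<ge> 0)"

definition hermitian :: "qop \<Rightarrow> bool" where
  "hermitian A \<longleftrightarrow> (\<forall>i j. A$i$j = cnj (A$j$i))"

definition projector :: "qop \<Rightarrow> bool" where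
  "projector P \<longleftrightarrow> hermitian P \<and> P ** P = P"

definition povm :: "nat \<Rightarrow> (nat \<Rightarrow> qop) \<Rightarrow> bool" where
  "povm n A \<longleftrightarrow> (\<forall>i<n. psd (A i)) \<and> (\<Sum>i<n. A i) = mat 1"

definition projective_povm :: "nat \<Rightarrow> (nat \<Rightarrow> qop) \<Rightarrow> bool" where
  "projective_povm n B \<longleftrightarrow> povm n B \<and> (\<forall>i<n. projector (B i))"

definition antipodal :: "qop \<Rightarrow> qop" where
  "antipodal A = mat (trace A) - A"

text \<open>Projective simulability: a finite convex combination (weights p j, j < K) of
  projective POVMs B j with m j outcomes, followed by classical post-processing q j i' i.\<close>
definition projective_simulable :: "nat \<Rightarrow> (nat \<Rightarrow> qop) \<Rightarrow> bool" where
  "projective_simulable n A \<longleftrightarrow>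
    (\<exists>(K::nat) (p::nat \<Rightarrow> real) (m::nat \<Rightarrow> nat) (B::nat \<Rightarrow> nat \<Rightarrow> qop)
        (q::nat \<Rightarrow> nat \<Rightarrow> nat \<Rightarrow> real).
      (\<forall>j<K. p j \<ge> 0) \<and> (\<Sum>j<K. p j) = 1 \<and>
      (\<forall>j<K. projective_povm (m j) (B j)) \<and>
      (\<forall>j<K. \<forall>i'<m j. (\<forall>i<n. q j i' i \<ge> 0) \<and> (\<Sum>i<n. q j i' i) = 1) \<and>
      (\<forall>i<n. A i = (\<Sum>j<K. p j *\<^sub>R (\<Sum>i'<m j. q j i' i *\<^sub>R B j i'))))"

definition jointly_measurable :: "nat \<Rightarrow> (nat \<Rightarrow> qop) \<Rightarrow> nat \<Rightarrow> (nat \<Rightarrow> qop) \<Rightarrow> bool" where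
  "jointly_measurable n A n' A' \<longleftrightarrow>
    (\<exists>M::nat \<Rightarrow> nat \<Rightarrow> qop.
      (\<forall>a<n. \<forall>b<n'. psd (M a b)) \<and> (\<Sum>a<n. \<Sum>b<n'. M a b) = mat 1 \<and>
      (\<forall>a<n. (\<Sum>b<n'. M a b) = A a) \<and>
      (\<forall>b<n'. (\<Sum>a<n. M a b) = A' b))"

end

theory Submission
  imports Defs
begin

text \<open>
  Every qubit effect \<open>E\<close> is \<open>Tr E / 2\<close> times an unsharp version
  \<open>(1 + s) P + (1 - s) (1 - P)\<close> of a two-outcome projective measurement \<open>{P, 1 - P}\<close>
  with \<open>Tr P = 1\<close>, and its antipodal operator is obtained by swapping \<open>P\<close> and \<open>1 - P\<close>.
  So if \<open>M\<close> jointly measures \<open>A\<close> and its antipodal POVM, the following is a projective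
  simulation of \<open>A\<close>: with probability \<open>Tr M\<^sub>x\<^sub>y / 2\<close> measure \<open>{P\<^sub>x\<^sub>y, 1 - P\<^sub>x\<^sub>y}\<close>
  and report \<open>x\<close> or \<open>y\<close> with probabilities \<open>(1 \<plusminus> s\<^sub>x\<^sub>y)/2\<close>. This realises
  \<open>M\<^sub>x\<^sub>y/2\<close> on outcome \<open>x\<close> and the antipode of \<open>M\<^sub>x\<^sub>y/2\<close> on outcome \<open>y\<close>; summing
  over all pairs gives \<open>A\<^sub>i/2\<close> plus the antipode of the antipode of \<open>A\<^sub>i/2\<close>, i.e. \<open>A\<^sub>i\<close>.

  Conversely, a projective qubit POVM \<open>B\<close> is jointly measurable with its antipodal POVM via
  \<open>N\<^sub>a\<^sub>b = Tr(B\<^sub>b) B\<^sub>a - \<delta>\<^sub>a\<^sub>b B\<^sub>a\<close>, and since taking antipodes is linear, this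
  property survives classical post-processing and convex mixtures.
\<close>

lemma mat_component [simp]: "(mat k :: 'a::zero^'n^'n) $ i $ j = (if i = j then k else 0)"
  by (simp add: mat_def)

lemma qop_eq_iff:
  "(X::qop) = Y \<longleftrightarrow> X$1$1 = Y$1$1 \<and> X$1$2 = Y$1$2 \<and> X$2$1 = Y$2$1 \<and> X$2$2 = Y$2$2"
  by (auto simp: vec_eq_iff forall_2)

lemma qop_mult_component: "((X::qop) ** Y) $ i $ j = X$i$1 * Y$1$j + X$i$2 * Y$2$j"
  by (simp add: matrix_matrix_mult_def sum_2)

lemma trace_qop: "trace (X::qop) = X$1$1 + X$2$2"
  by (simp add: trace_def sum_2)

lemma qform_qop:
  "qform A v = cnj (v$1) * A$1$1 * v$1 + cnj (v$1) * A$1$2 * v$2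
             + cnj (v$2) * A$2$1 * v$1 + cnj (v$2) * A$2$2 * v$2"
  by (simp add: qform_def sum_2)

lemma trace_sum_qop: "trace (sum f S :: qop) = (\<Sum>x\<in>S. trace (f x))"
  by (simp add: trace_qop sum.distrib)

lemma trace_mat1_qop: "trace (mat 1 :: qop) = 2"
  by (simp add: trace_qop)

lemma psd_diag:
  assumes "psd E"
  shows "Im (E$1$1) = 0" "Re (E$1$1) \<ge> 0" "Im (E$2$2) = 0" "Re (E$2$2) \<ge> 0"
proof -
  have "qform E (vector [1, 0]) = E$1$1" "qform E (vector [0, 1]) = E$2$2"
    by (simp_all add: qform_qop)
  then show "Im (E$1$1) = 0" "Re (E$1$1) \<ge> 0" "Im (E$2$2) = 0" "Re (E$2$2) \<ge> 0"
    using assms unfolding psd_def by metis+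
qed

lemma psd_hermitian:
  assumes "psd E"
  shows "hermitian E"
proof -
  have "Im (qform E (vector [1, 1])) = 0" "Im (qform E (vector [1, \<i>])) = 0"
    using assms unfolding psd_def by auto
  then have "E$2$1 = cnj (E$1$2)"
    using psd_diag[OF assms] by (simp add: qform_qop complex_eq_iff)
  then show ?thesis
    unfolding hermitian_def forall_2 using psd_diag[OF assms] by (auto simp: complex_eq_iff)
qed

lemma hermitian_entries:
  assumes "hermitian P"
  shows "P$1$1 = of_real (Re (P$1$1))" "P$2$2 = of_real (Re (P$2$2))" "P$2$1 = cnj (P$1$2)"
proof -
  have "P$1$1 = cnj (P$1$1)" "P$2$2 = cnj (P$2$2)" "P$2$1 = cnj (P$1$2)"
    using assms unfolding hermitian_def by metis+
  then show "P$1$1 = of_real (Re (P$1$1))" "P$2$2 = of_real (Re (P$2$2))" "P$2$1 = cnj (P$1$2)"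
    by (auto simp: complex_eq_iff)
qed

lemma trace_psd_nonneg: "psd E \<Longrightarrow> Re (trace E) \<ge> 0"
  using psd_diag[of E] by (simp add: trace_qop)

lemma psd_det_nonneg:
  assumes "psd E"
  shows "(cmod (E$1$2))\<^sup>2 \<le> Re (E$1$1) * Re (E$2$2)"
proof -
  let ?a = "E$1$1" and ?b = "E$1$2" and ?d = "E$2$2"
  have h: "E$2$1 = cnj ?b" using hermitian_entries[OF psd_hermitian[OF assms]] by simp
  have d: "Im ?a = 0" "Re ?a \<ge> 0" "Im ?d = 0" "Re ?d \<ge> 0" using psd_diag[OF assms] by auto
  have nonneg: "\<And>v. Re (qform E v) \<ge> 0" using assms unfolding psd_def by auto
  have b2: "(cmod ?b)\<^sup>2 = (Re ?b)\<^sup>2 + (Im ?b)\<^sup>2" by (simp add: cmod_power2)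
  \<comment> \<open>at the columns of the adjugate the form equals \<open>a det E\<close> and \<open>d det E\<close>;
      the third vector settles the case \<open>Tr E = 0\<close>\<close>
  have q1: "Re (qform E (vector [- ?b, of_real (Re ?a)])) = Re ?a * (Re ?a * Re ?d - (cmod ?b)\<^sup>2)"
    and q2: "Re (qform E (vector [of_real (Re ?d), - cnj ?b])) = Re ?d * (Re ?a * Re ?d - (cmod ?b)\<^sup>2)"
    and q3: "Re (qform E (vector [1, - cnj ?b])) = Re ?a - 2 * (cmod ?b)\<^sup>2 + Re ?d * (cmod ?b)\<^sup>2"
    using d h b2 by (simp_all add: qform_qop algebra_simps power2_eq_square)
  have "0 \<le> (Re ?a + Re ?d) * (Re ?a * Re ?d - (cmod ?b)\<^sup>2)"
    using nonneg[of "vector [- ?b, of_real (Re ?a)]"] nonneg[of "vector [of_real (Re ?d), - cnj ?b]"] q1 q2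
    by (simp add: algebra_simps)
  moreover have "(cmod ?b)\<^sup>2 \<le> 0" if "Re ?a + Re ?d = 0"
  proof -
    have "Re ?a = 0" "Re ?d = 0" using that d by linarith+
    then show ?thesis using nonneg[of "vector [1, - cnj ?b]"] q3 by simp
  qed
  ultimately show ?thesis
    using d by (smt (verit) mult_le_0_iff zero_le_mult_iff)
qed

lemma qform_scaleR: "qform (c *\<^sub>R X) v = of_real c * qform X v"
  unfolding qform_qop vector_scaleR_component by (simp add: scaleR_conv_of_real algebra_simps)

lemma qform_add: "qform (X + Y) v = qform X v + qform Y v"
  by (simp add: qform_qop algebra_simps)

lemma psd_zero [simp]: "psd 0"
  by (simp add: psd_def qform_qop)

lemma psd_scaleR: "psd X \<Longrightarrow> c \<ge> 0 \<Longrightarrow> psd (c *\<^sub>R X)"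
  by (simp add: psd_def qform_scaleR)

lemma psd_add: "psd X \<Longrightarrow> psd Y \<Longrightarrow> psd (X + Y)"
  by (simp add: psd_def qform_add)

lemma psd_sum: "(\<And>x. x \<in> S \<Longrightarrow> psd (f x)) \<Longrightarrow> psd (sum f S)"
  by (induction S rule: infinite_finite_induct) (auto intro: psd_add)

lemma matrix_diff_rdistrib: "(X - Y) ** (Z::'a::ring_1^'n^'m) = X ** Z - Y ** Z"
  by (simp add: matrix_matrix_mult_def vec_eq_iff sum_subtractf left_diff_distrib)

lemma matrix_diff_ldistrib: "(X::'a::ring_1^'n^'m) ** (Y - Z) = X ** Y - X ** Z"
  by (simp add: matrix_matrix_mult_def vec_eq_iff sum_subtractf right_diff_distrib)

lemma projector_psd:
  assumes "projector P"
  shows "psd P"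
  unfolding psd_def
proof
  fix v :: "complex^2"
  have h: "hermitian P" and idem: "P ** P = P" using assms unfolding projector_def by auto
  let ?w1 = "P$1$1 * v$1 + P$1$2 * v$2" and ?w2 = "P$2$1 * v$1 + P$2$2 * v$2"
  obtain a d b where e: "P$1$1 = of_real a" "P$2$2 = of_real d" "P$2$1 = cnj b" "P$1$2 = b"
    using hermitian_entries[OF h] by metis
  \<comment> \<open>\<open>v* P v = v* P* P v = |P v|\<^sup>2\<close>\<close>
  have "qform P v = qform (P ** P) v" using idem by simp
  also have "\<dots> = cnj ?w1 * ?w1 + cnj ?w2 * ?w2"
    unfolding qform_qop qop_mult_component e by (simp add: algebra_simps)
  finally have "qform P v = of_real ((cmod ?w1)\<^sup>2 + (cmod ?w2)\<^sup>2)"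
    by (simp only: complex_norm_square mult.commute of_real_add)
  then show "Im (qform P v) = 0 \<and> 0 \<le> Re (qform P v)" by simp
qed

lemma projector_complement:
  assumes "projector P"
  shows "projector (mat 1 - P)"
proof -
  have "P ** P = P" using assms unfolding projector_def by simp
  then have "(mat 1 - P) ** (mat 1 - P) = mat 1 - P"
    by (simp add: matrix_diff_rdistrib matrix_diff_ldistrib)
  moreover have "hermitian (mat 1 - P)"
    unfolding hermitian_def
  proof (intro allI)
    fix i j
    have "P$i$j = cnj (P$j$i)" using assms unfolding projector_def hermitian_def by blast
    then show "(mat 1 - P)$i$j = cnj ((mat 1 - P)$j$i)" by auto
  qed
  ultimately show ?thesis unfolding projector_def by simp
qed

lemma projector_eq_0_or_trace_ge_1:
  assumes "projector P"
  shows "P = 0 \<or> Re (trace P) \<ge> 1"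
proof -
  have h: "hermitian P" and idem: "P ** P = P" using assms unfolding projector_def by auto
  obtain a d b where e: "P$1$1 = of_real a" "P$2$2 = of_real d" "P$2$1 = cnj b" "P$1$2 = b"
    using hermitian_entries[OF h] by metis
  have n: "cnj b * b = of_real ((cmod b)\<^sup>2)" by (metis complex_norm_square mult.commute)
  have i11: "(P ** P)$1$1 = P$1$1" and i12: "(P ** P)$1$2 = P$1$2" and i22: "(P ** P)$2$2 = P$2$2"
    using idem by auto
  have r11: "a * a + (cmod b)\<^sup>2 = a" using i11 unfolding qop_mult_component e
    by (metis n mult.commute of_real_add of_real_eq_iff of_real_mult)
  have r22: "(cmod b)\<^sup>2 + d * d = d" using i22 unfolding qop_mult_component e
    by (metis n of_real_add of_real_eq_iff of_real_mult)
  have r12: "b * of_real (a + d - 1) = 0" using i12 unfolding qop_mult_component e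
    by (simp add: algebra_simps)
  have tr: "Re (trace P) = a + d" by (simp add: trace_qop e)
  show ?thesis
  proof (cases "b = 0")
    case False
    with r12 have "of_real (a + d - 1) = (0::complex)" by simp
    then have "a + d = 1" by (simp only: of_real_eq_0_iff)
    with tr show ?thesis by simp
  next
    case True
    with r11 r22 have "a = 0 \<or> a = 1" "d = 0 \<or> d = 1" by auto
    moreover have "P = 0" if "a = 0" "d = 0"
      using True that e by (simp add: qop_eq_iff)
    ultimately show ?thesis using tr by auto
  qed
qed

lemma antipodal_add: "antipodal (X + Y) = antipodal X + antipodal Y"
  by (simp add: antipodal_def qop_eq_iff trace_qop)

lemma antipodal_scaleR: "antipodal (c *\<^sub>R X) = c *\<^sub>R antipodal X"
  by (simp add: antipodal_def qop_eq_iff trace_qop algebra_simps)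

lemma antipodal_sum: "antipodal (sum f S) = (\<Sum>x\<in>S. antipodal (f x))"
  by (induction S rule: infinite_finite_induct)
    (simp_all add: antipodal_add antipodal_def qop_eq_iff trace_qop)

lemma antipodal_antipodal [simp]: "antipodal (antipodal X) = X"
  by (simp add: antipodal_def qop_eq_iff trace_qop)

lemma antipodal_hermitian:
  assumes "hermitian X"
  shows "antipodal X = Re (trace X) *\<^sub>R mat 1 - X"
  using hermitian_entries[OF assms] by (simp add: antipodal_def qop_eq_iff trace_qop complex_eq_iff)

lemma antipodal_rank_one_combination:
  assumes "trace P = 1"
  shows "antipodal (\<alpha> *\<^sub>R P + \<beta> *\<^sub>R (mat 1 - P)) = \<beta> *\<^sub>R P + \<alpha> *\<^sub>R (mat 1 - P)"
proof -
  have "P$2$2 = 1 - P$1$1" using assms by (simp add: trace_qop eq_diff_eq add.commute)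
  then show ?thesis unfolding antipodal_def qop_eq_iff trace_qop by simp
qed

subsection \<open>Spectral decomposition of qubit effects\<close>

text \<open>The matrix \<open>(1 + r\<cdot>\<sigma>)/2\<close> for the Bloch vector \<open>r = (2 Re c, -2 Im c, 2 p)\<close>.\<close>

definition bloch_projector :: "real \<Rightarrow> complex \<Rightarrow> qop" where
  "bloch_projector p c = (\<chi> i j. if i = 1 then (if j = 1 then of_real (1/2 + p) else c)
                                            else (if j = 1 then cnj c else of_real (1/2 - p)))"

lemma bloch_projector_component [simp]:
  "bloch_projector p c $ 1 $ 1 = of_real (1/2 + p)" "bloch_projector p c $ 1 $ 2 = c"
  "bloch_projector p c $ 2 $ 1 = cnj c" "bloch_projector p c $ 2 $ 2 = of_real (1/2 - p)"
  by (simp_all add: bloch_projector_def)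

lemma trace_bloch_projector [simp]: "trace (bloch_projector p c) = 1"
proof -
  have "trace (bloch_projector p c) = of_real ((1/2 + p) + (1/2 - p))"
    by (simp only: trace_qop bloch_projector_component of_real_add)
  then show ?thesis by simp
qed

lemma projector_bloch_projector:
  assumes "p\<^sup>2 + (cmod c)\<^sup>2 = 1/4"
  shows "projector (bloch_projector p c)"
proof -
  have "cnj c * c = of_real (1/4 - p\<^sup>2)" "c * cnj c = of_real (1/4 - p\<^sup>2)"
    using assms by (metis add_diff_cancel_left' complex_norm_square mult.commute)+
  then show ?thesis
    unfolding projector_def hermitian_def forall_2 qop_eq_iff qop_mult_component
    by (simp add: algebra_simps power2_eq_square flip: of_real_diff of_real_mult of_real_add)
      (auto simp: algebra_simps)
qed

lemma psd_eigen_decomposition: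
  assumes "psd E"
  obtains P D where "projector P" "trace P = 1" "0 \<le> D" "D \<le> Re (trace E)"
    "E = ((Re (trace E) + D) / 2) *\<^sub>R P + ((Re (trace E) - D) / 2) *\<^sub>R (mat 1 - P)"
proof -
  define a where "a = Re (E$1$1)"
  define d where "d = Re (E$2$2)"
  define b where "b = E$1$2"
  define t where "t = Re (trace E)"
  have entries: "E$1$1 = of_real a" "E$2$2 = of_real d" "E$2$1 = cnj b" "E$1$2 = b"
    using hermitian_entries[OF psd_hermitian[OF assms]] unfolding a_def d_def b_def by auto
  have t: "t = a + d" by (simp add: t_def trace_qop entries)
  have "a \<ge> 0" "d \<ge> 0" using psd_diag[OF assms] unfolding a_def d_def by auto
  have det: "(cmod b)\<^sup>2 \<le> a * d" using psd_det_nonneg[OF assms] unfolding a_def d_def b_def .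
  define D where "D = sqrt ((a - d)\<^sup>2 + 4 * (cmod b)\<^sup>2)"
  have "D \<ge> 0" unfolding D_def by simp
  have D2: "D\<^sup>2 = (a - d)\<^sup>2 + 4 * (cmod b)\<^sup>2" unfolding D_def by simp
  have "D \<le> t"
  proof -
    have "(a - d)\<^sup>2 + 4 * (cmod b)\<^sup>2 \<le> (a + d)\<^sup>2" using det by (simp add: power2_eq_square algebra_simps)
    then have "D \<le> sqrt ((a + d)\<^sup>2)" unfolding D_def using real_sqrt_le_mono by blast
    then show ?thesis using \<open>a \<ge> 0\<close> \<open>d \<ge> 0\<close> t by simp
  qed
  \<comment> \<open>for \<open>D = 0\<close> the operator \<open>E\<close> is scalar and any rank-one projector will do\<close>
  define p where "p = (if D = 0 then 1/2 else (a - d) / (2 * D))"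
  define c where "c = (if D = 0 then 0 else b / of_real D)"
  define P where "P = bloch_projector p c"
  have "p\<^sup>2 + (cmod c)\<^sup>2 = 1/4"
  proof (cases "D = 0")
    case False
    then have "p\<^sup>2 + (cmod c)\<^sup>2 = ((a - d)\<^sup>2 + 4 * (cmod b)\<^sup>2) / (4 * D\<^sup>2)"
      unfolding p_def c_def using \<open>D \<ge> 0\<close> by (simp add: norm_divide field_simps)
    with False show ?thesis by (simp add: D2[symmetric])
  qed (simp add: p_def c_def power2_eq_square)
  then have "projector P" unfolding P_def by (rule projector_bloch_projector)
  have "D * p = (a - d) / 2 \<and> of_real D * c = b"
  proof (cases "D = 0")
    case True
    then have "(a - d)\<^sup>2 + 4 * (cmod b)\<^sup>2 = 0" using D2 by simp
    then have "a = d" "b = 0" by (auto simp: add_nonneg_eq_0_iff)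
    with True show ?thesis by simp
  qed (simp add: p_def c_def)
  then have "E = ((t + D) / 2) *\<^sub>R P + ((t - D) / 2) *\<^sub>R (mat 1 - P)"
    unfolding qop_eq_iff t by (auto simp: entries P_def complex_eq_iff algebra_simps) (simp_all add: field_simps)
  moreover have "trace P = 1" by (simp add: P_def)
  ultimately show ?thesis
    using that \<open>projector P\<close> \<open>0 \<le> D\<close> \<open>D \<le> t\<close> unfolding t_def by blast
qed

lemma psd_unsharp_projection_form:
  assumes "psd E"
  obtains P s where "projector P" "trace P = 1" "0 \<le> s" "s \<le> 1"
    "E = (Re (trace E) / 2) *\<^sub>R ((1 + s) *\<^sub>R P + (1 - s) *\<^sub>R (mat 1 - P))"
proof -
  obtain P D where P: "projector P" "trace P = 1" and D: "0 \<le> D" "D \<le> Re (trace E)"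
    and E: "E = ((Re (trace E) + D) / 2) *\<^sub>R P + ((Re (trace E) - D) / 2) *\<^sub>R (mat 1 - P)"
    using psd_eigen_decomposition[OF assms] by blast
  define t where "t = Re (trace E)"
  define s where "s = D / t"
  have "(t + D) / 2 = t / 2 * (1 + s)" "(t - D) / 2 = t / 2 * (1 - s)"
    using D by (auto simp: s_def t_def field_simps)
  with E have "E = (t / 2) *\<^sub>R ((1 + s) *\<^sub>R P + (1 - s) *\<^sub>R (mat 1 - P))"
    unfolding t_def by (simp only: scaleR_add_right scaleR_scaleR)
  moreover have "0 \<le> s" "s \<le> 1"
    using D by (auto simp: s_def t_def divide_le_eq_1)
  ultimately show ?thesis
    using that P unfolding t_def by blast
qed

subsection \<open>Joint measurability\<close>

lemma jointly_measurable_cong: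
  assumes "\<And>i. i < n \<Longrightarrow> A i = C i" "\<And>k. k < n' \<Longrightarrow> A' k = C' k"
  shows "jointly_measurable n A n' A' \<longleftrightarrow> jointly_measurable n C n' C'"
  using assms unfolding jointly_measurable_def by simp

lemma jointly_measurable_postprocessing:
  assumes "jointly_measurable m B m' B'"
    and q: "\<And>a i. a < m \<Longrightarrow> i < n \<Longrightarrow> q a i \<ge> 0" "\<And>a. a < m \<Longrightarrow> (\<Sum>i<n. q a i) = 1"
    and q': "\<And>b k. b < m' \<Longrightarrow> k < n' \<Longrightarrow> q' b k \<ge> 0" "\<And>b. b < m' \<Longrightarrow> (\<Sum>k<n'. q' b k) = 1"
  shows "jointly_measurable n (\<lambda>i. \<Sum>a<m. q a i *\<^sub>R B a) n' (\<lambda>k. \<Sum>b<m'. q' b k *\<^sub>R B' b)"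
proof -
  obtain M where psd: "\<forall>a<m. \<forall>b<m'. psd (M a b)" and total: "(\<Sum>a<m. \<Sum>b<m'. M a b) = mat 1"
    and marg: "\<forall>a<m. (\<Sum>b<m'. M a b) = B a" and marg': "\<forall>b<m'. (\<Sum>a<m. M a b) = B' b"
    using assms(1) unfolding jointly_measurable_def by blast
  define N where "N i k = (\<Sum>a<m. \<Sum>b<m'. (q a i * q' b k) *\<^sub>R M a b)" for i k
  have N_marg: "(\<Sum>k<n'. N i k) = (\<Sum>a<m. q a i *\<^sub>R B a)" for i
  proof -
    have "(\<Sum>k<n'. N i k) = (\<Sum>a<m. \<Sum>b<m'. (q a i * (\<Sum>k<n'. q' b k)) *\<^sub>R M a b)"
      unfolding N_def by (simp add: sum.swap[of _ "{..<n'}"] sum_distrib_left scaleR_sum_left)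
    also have "\<dots> = (\<Sum>a<m. q a i *\<^sub>R (\<Sum>b<m'. M a b))"
      by (intro sum.cong refl) (simp add: q'(2) scaleR_sum_right)
    also have "\<dots> = (\<Sum>a<m. q a i *\<^sub>R B a)"
      by (intro sum.cong refl) (simp add: marg)
    finally show ?thesis .
  qed
  have N_marg': "(\<Sum>i<n. N i k) = (\<Sum>b<m'. q' b k *\<^sub>R B' b)" for k
  proof -
    have "(\<Sum>i<n. N i k) = (\<Sum>a<m. \<Sum>b<m'. ((\<Sum>i<n. q a i) * q' b k) *\<^sub>R M a b)"
      unfolding N_def by (simp add: sum.swap[of _ "{..<n}"] sum_distrib_right scaleR_sum_left)
    also have "\<dots> = (\<Sum>a<m. \<Sum>b<m'. q' b k *\<^sub>R M a b)"
      by (intro sum.cong refl) (simp add: q(2))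
    also have "\<dots> = (\<Sum>b<m'. q' b k *\<^sub>R (\<Sum>a<m. M a b))"
      by (simp add: sum.swap[of _ "{..<m}"] scaleR_sum_right)
    also have "\<dots> = (\<Sum>b<m'. q' b k *\<^sub>R B' b)"
      by (intro sum.cong refl) (simp add: marg')
    finally show ?thesis .
  qed
  have "(\<Sum>i<n. \<Sum>k<n'. N i k) = (\<Sum>a<m. (\<Sum>i<n. q a i) *\<^sub>R B a)"
    by (simp add: N_marg sum.swap[of _ "{..<n}"] scaleR_sum_left)
  also have "\<dots> = mat 1"
    using marg total by (simp add: q(2))
  finally have "(\<Sum>i<n. \<Sum>k<n'. N i k) = mat 1" .
  moreover have "psd (N i k)" if "i < n" "k < n'" for i k
    unfolding N_def using psd q q' that by (auto intro!: psd_sum psd_scaleR)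
  ultimately show ?thesis
    unfolding jointly_measurable_def using N_marg N_marg' by blast
qed

lemma jointly_measurable_mixture:
  assumes jm: "\<And>j. j \<in> J \<Longrightarrow> jointly_measurable n (A j) n' (A' j)"
    and p: "\<And>j. j \<in> J \<Longrightarrow> p j \<ge> 0" "(\<Sum>j\<in>J. p j) = 1"
  shows "jointly_measurable n (\<lambda>i. \<Sum>j\<in>J. p j *\<^sub>R A j i) n' (\<lambda>k. \<Sum>j\<in>J. p j *\<^sub>R A' j k)"
proof -
  have "\<forall>j\<in>J. \<exists>M. (\<forall>a<n. \<forall>b<n'. psd (M a b)) \<and> (\<Sum>a<n. \<Sum>b<n'. M a b) = mat 1 \<and>
      (\<forall>a<n. (\<Sum>b<n'. M a b) = A j a) \<and> (\<forall>b<n'. (\<Sum>a<n. M a b) = A' j b)"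
    using jm unfolding jointly_measurable_def by blast
  then obtain M where M: "\<forall>j\<in>J. (\<forall>a<n. \<forall>b<n'. psd (M j a b)) \<and> (\<Sum>a<n. \<Sum>b<n'. M j a b) = mat 1 \<and>
      (\<forall>a<n. (\<Sum>b<n'. M j a b) = A j a) \<and> (\<forall>b<n'. (\<Sum>a<n. M j a b) = A' j b)"
    by (rule bchoice[elim_format]) blast
  define N where "N a b = (\<Sum>j\<in>J. p j *\<^sub>R M j a b)" for a b
  have "(\<Sum>a<n. \<Sum>b<n'. N a b) = (\<Sum>j\<in>J. p j *\<^sub>R (\<Sum>a<n. \<Sum>b<n'. M j a b))"
    unfolding N_def by (simp add: scaleR_sum_right sum.swap[of _ J])
  also have "\<dots> = (\<Sum>j\<in>J. p j *\<^sub>R mat 1)"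
    using M by (intro sum.cong refl) metis
  also have "\<dots> = mat 1"
    using p by (simp flip: scaleR_sum_left)
  finally have "(\<Sum>a<n. \<Sum>b<n'. N a b) = mat 1" .
  moreover have "(\<Sum>b<n'. N a b) = (\<Sum>j\<in>J. p j *\<^sub>R A j a)" if "a < n" for a
  proof -
    have "(\<Sum>b<n'. N a b) = (\<Sum>j\<in>J. p j *\<^sub>R (\<Sum>b<n'. M j a b))"
      by (simp add: N_def sum.swap[of _ J] scaleR_sum_right)
    also have "\<dots> = (\<Sum>j\<in>J. p j *\<^sub>R A j a)"
      using M that by (intro sum.cong refl) simp
    finally show ?thesis .
  qed
  moreover have "(\<Sum>a<n. N a b) = (\<Sum>j\<in>J. p j *\<^sub>R A' j b)" if "b < n'" for b
  proof -
    have "(\<Sum>a<n. N a b) = (\<Sum>j\<in>J. p j *\<^sub>R (\<Sum>a<n. M j a b))"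
      by (simp add: N_def sum.swap[of _ J] scaleR_sum_right)
    also have "\<dots> = (\<Sum>j\<in>J. p j *\<^sub>R A' j b)"
      using M that by (intro sum.cong refl) simp
    finally show ?thesis .
  qed
  moreover have "psd (N a b)" if "a < n" "b < n'" for a b
    unfolding N_def using M p that by (auto intro!: psd_sum psd_scaleR)
  ultimately show ?thesis
    unfolding jointly_measurable_def by blast
qed

lemma jointly_measurable_projective_antipodal:
  assumes "projective_povm m B"
  shows "jointly_measurable m B m (\<lambda>b. antipodal (B b))"
proof -
  have psd: "psd (B a)" and proj: "projector (B a)" if "a < m" for a
    using assms that unfolding projective_povm_def povm_def by auto
  have sum_B: "(\<Sum>a<m. B a) = mat 1" using assms unfolding projective_povm_def povm_def by auto
  have "(\<Sum>b<m. Re (trace (B b))) = Re (trace (\<Sum>b<m. B b))"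
    by (simp add: trace_sum_qop Re_sum)
  then have sum_trace: "(\<Sum>b<m. Re (trace (B b))) = 2"
    by (simp add: sum_B trace_mat1_qop)
  \<comment> \<open>\<open>N a b\<close> is psd because a nonzero qubit projector has trace at least 1\<close>
  define N where "N a b = Re (trace (B b)) *\<^sub>R B a - (if a = b then B a else 0)" for a b
  have "psd (N a b)" if "a < m" "b < m" for a b
  proof (cases "a = b")
    case True
    have "N a b = (Re (trace (B b)) - 1) *\<^sub>R B b"
      unfolding N_def True by (simp add: scaleR_diff_left)
    with projector_eq_0_or_trace_ge_1[OF proj[OF that(2)]] psd[OF that(2)] show ?thesis
      by (auto intro: psd_scaleR)
  next
    case False
    with trace_psd_nonneg[OF psd] psd that show ?thesis
      unfolding N_def by (auto intro: psd_scaleR)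
  qed
  moreover have marg: "(\<Sum>b<m. N a b) = B a" if "a < m" for a
    using that by (simp add: N_def sum_subtractf sum_trace scaleR_2 flip: scaleR_sum_left)
  moreover have "(\<Sum>a<m. N a b) = antipodal (B b)" if "b < m" for b
  proof -
    have "(\<Sum>a<m. N a b) = Re (trace (B b)) *\<^sub>R mat 1 - B b"
      using that by (simp add: N_def sum_subtractf sum_B flip: scaleR_sum_right)
    then show ?thesis
      using antipodal_hermitian proj[OF that] unfolding projector_def by simp
  qed
  moreover have "(\<Sum>a<m. \<Sum>b<m. N a b) = mat 1" by (simp add: marg sum_B)
  ultimately show ?thesis unfolding jointly_measurable_def by blast
qed

lemma jointly_measurable_antipodal_if_projective_simulable:
  assumes "projective_simulable n A"
  shows "jointly_measurable n A n (\<lambda>i. antipodal (A i))"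
proof -
  obtain K :: nat and p :: "nat \<Rightarrow> real" and m :: "nat \<Rightarrow> nat" and B :: "nat \<Rightarrow> nat \<Rightarrow> qop"
    and q :: "nat \<Rightarrow> nat \<Rightarrow> nat \<Rightarrow> real" where p: "\<forall>j<K. p j \<ge> 0" "(\<Sum>j<K. p j) = 1"
    and B: "\<forall>j<K. projective_povm (m j) (B j)"
    and q: "\<forall>j<K. \<forall>i'<m j. (\<forall>i<n. q j i' i \<ge> 0) \<and> (\<Sum>i<n. q j i' i) = 1"
    and A: "\<forall>i<n. A i = (\<Sum>j<K. p j *\<^sub>R (\<Sum>i'<m j. q j i' i *\<^sub>R B j i'))"
    using assms unfolding projective_simulable_def by blast
  have "jointly_measurable n (\<lambda>i. \<Sum>a<m j. q j a i *\<^sub>R B j a)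
                            n (\<lambda>k. \<Sum>b<m j. q j b k *\<^sub>R antipodal (B j b))" if "j < K" for j
    using q that
    by (intro jointly_measurable_postprocessing jointly_measurable_projective_antipodal) (auto simp: B)
  then have "jointly_measurable n (\<lambda>i. \<Sum>j<K. p j *\<^sub>R (\<Sum>a<m j. q j a i *\<^sub>R B j a))
                              n (\<lambda>k. \<Sum>j<K. p j *\<^sub>R (\<Sum>b<m j. q j b k *\<^sub>R antipodal (B j b)))"
    using p by (intro jointly_measurable_mixture) auto
  then show ?thesis
    by (rule jointly_measurable_cong[THEN iffD1, rotated -1])
      (simp_all add: A antipodal_sum antipodal_scaleR)
qed

subsection \<open>Simulation by two-outcome projective measurements\<close>

definition binary_projective_simulable :: "nat \<Rightarrow> (nat \<Rightarrow> qop) \<Rightarrow> bool" where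
  "binary_projective_simulable n C \<longleftrightarrow>
    (\<exists>P r r'. projector P \<and> (\<forall>i<n. 0 \<le> r i \<and> 0 \<le> r' i) \<and> (\<Sum>i<n. r i) = 1 \<and> (\<Sum>i<n. r' i) = 1 \<and>
      (\<forall>i<n. C i = r i *\<^sub>R P + r' i *\<^sub>R (mat 1 - P)))"

lemma projective_povm_complement:
  assumes "projector P"
  shows "projective_povm 2 (\<lambda>i. if i = 0 then P else mat 1 - P)"
  using assms projector_complement[OF assms] projector_psd
  by (auto simp: projective_povm_def povm_def less_2_cases_iff numeral_2_eq_2)

lemma projective_simulable_mixture_of_binary:
  fixes J :: "'j set"
  assumes C: "\<And>j. j \<in> J \<Longrightarrow> binary_projective_simulable n (C j)"
    and p: "\<And>j. j \<in> J \<Longrightarrow> p j \<ge> 0" "(\<Sum>j\<in>J. p j) = 1"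
    and A: "\<And>i. i < n \<Longrightarrow> A i = (\<Sum>j\<in>J. p j *\<^sub>R C j i)"
  shows "projective_simulable n A"
proof -
  obtain P r r' where dec: "\<And>j. j \<in> J \<Longrightarrow> projector (P j) \<and> (\<forall>i<n. 0 \<le> r j i \<and> 0 \<le> r' j i) \<and>
      (\<Sum>i<n. r j i) = 1 \<and> (\<Sum>i<n. r' j i) = 1 \<and>
      (\<forall>i<n. C j i = r j i *\<^sub>R P j + r' j i *\<^sub>R (mat 1 - P j))"
    using C unfolding binary_projective_simulable_def by metis
  have "finite J" using p(2) by (metis sum.infinite zero_neq_one)
  then obtain h where h: "bij_betw h {..<card J} J"
    using ex_bij_betw_nat_finite atLeast0LessThan by metis
  then have hJ: "h k \<in> J" if "k < card J" for k
    using that bij_betwE by blast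
  define B :: "nat \<Rightarrow> nat \<Rightarrow> qop" where "B k = (\<lambda>i'. if i' = 0 then P (h k) else mat 1 - P (h k))" for k
  define q :: "nat \<Rightarrow> nat \<Rightarrow> nat \<Rightarrow> real" where "q k i' i = (if i' = 0 then r (h k) i else r' (h k) i)" for k i' i
  have "(\<Sum>k<card J. p (h k)) = 1"
    using p(2) sum.reindex_bij_betw[OF h, of p] by simp
  moreover have "projective_povm 2 (B k)" if "k < card J" for k
    unfolding B_def using dec[OF hJ[OF that]] by (intro projective_povm_complement) simp
  moreover have "(\<forall>i<n. q k i' i \<ge> 0) \<and> (\<Sum>i<n. q k i' i) = 1" if "k < card J" for k i'
    using dec[OF hJ[OF that]] by (cases "i' = 0") (simp_all add: q_def)
  moreover have "A i = (\<Sum>k<card J. p (h k) *\<^sub>R (\<Sum>i'<2. q k i' i *\<^sub>R B k i'))" if "i < n" for i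
  proof -
    have "A i = (\<Sum>k<card J. p (h k) *\<^sub>R C (h k) i)"
      using A[OF that] sum.reindex_bij_betw[OF h, of "\<lambda>j. p j *\<^sub>R C j i"] by simp
    also have "\<dots> = (\<Sum>k<card J. p (h k) *\<^sub>R (\<Sum>i'<2. q k i' i *\<^sub>R B k i'))"
      using dec hJ that by (intro sum.cong refl) (simp add: q_def B_def numeral_2_eq_2)
    finally show ?thesis .
  qed
  ultimately show ?thesis
    unfolding projective_simulable_def using p(1) hJ
    by (intro exI[of _ "card J"] exI[of _ "p \<circ> h"] exI[of _ "\<lambda>_. 2"] exI[of _ B] exI[of _ q]) auto
qed

lemma scaleR_binary_mixture:
  fixes P Q :: "'a::real_vector"
  shows "(t/2) *\<^sub>R (((u * (1 + s) + v * (1 - s)) / 2) *\<^sub>R P + ((u * (1 - s) + v * (1 + s)) / 2) *\<^sub>R Q)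
       = (u/2) *\<^sub>R ((t/2) *\<^sub>R ((1 + s) *\<^sub>R P + (1 - s) *\<^sub>R Q))
       + (v/2) *\<^sub>R ((t/2) *\<^sub>R ((1 - s) *\<^sub>R P + (1 + s) *\<^sub>R Q))"
    (is "?lhs = ?rhs")
proof -
  have "?lhs = ((t/2) * ((u * (1 + s) + v * (1 - s)) / 2)) *\<^sub>R P
             + ((t/2) * ((u * (1 - s) + v * (1 + s)) / 2)) *\<^sub>R Q"
    by (simp only: scaleR_add_right scaleR_scaleR)
  also have "\<dots> = (u/2 * (t/2 * (1 + s)) + v/2 * (t/2 * (1 - s))) *\<^sub>R P
                   + (u/2 * (t/2 * (1 - s)) + v/2 * (t/2 * (1 + s))) *\<^sub>R Q"
  proof -
    have "(t/2) * ((u * (1 + s) + v * (1 - s)) / 2) = u/2 * (t/2 * (1 + s)) + v/2 * (t/2 * (1 - s))"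
      "(t/2) * ((u * (1 - s) + v * (1 + s)) / 2) = u/2 * (t/2 * (1 - s)) + v/2 * (t/2 * (1 + s))"
      by (simp_all add: field_simps)
    then show ?thesis by (simp only:)
  qed
  also have "\<dots> = (u/2 * (t/2 * (1 + s))) *\<^sub>R P + (u/2 * (t/2 * (1 - s))) *\<^sub>R Q
                   + ((v/2 * (t/2 * (1 - s))) *\<^sub>R P + (v/2 * (t/2 * (1 + s))) *\<^sub>R Q)"
    by (simp only: scaleR_add_left add_ac)
  also have "\<dots> = ?rhs"
    by (simp only: scaleR_add_right scaleR_scaleR)
  finally show ?thesis .
qed

lemma binary_projective_simulable_antipodal_pair:
  assumes "psd E" "x < n" "y < n"
  shows "\<exists>C. binary_projective_simulable n C \<and> (\<forall>i. (Re (trace E) / 2) *\<^sub>R C i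
    = (if i = x then (1/2) *\<^sub>R E else 0) + (if i = y then (1/2) *\<^sub>R antipodal E else 0))"
proof -
  obtain P s where P: "projector P" "trace P = 1" and s: "0 \<le> s" "s \<le> 1"
    and E: "E = (Re (trace E) / 2) *\<^sub>R ((1 + s) *\<^sub>R P + (1 - s) *\<^sub>R (mat 1 - P))"
    using psd_unsharp_projection_form[OF assms(1)] by blast
  define u :: "nat \<Rightarrow> real" where "u i = of_bool (i = x)" for i
  define v :: "nat \<Rightarrow> real" where "v i = of_bool (i = y)" for i
  define r where "r i = (u i * (1 + s) + v i * (1 - s)) / 2" for i
  define r' where "r' i = (u i * (1 - s) + v i * (1 + s)) / 2" for i
  define C where "C i = r i *\<^sub>R P + r' i *\<^sub>R (mat 1 - P)" for i
  have "(\<Sum>i<n. u i) = 1" "(\<Sum>i<n. v i) = 1"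
    using assms by (auto simp: u_def v_def)
  then have "(\<Sum>i<n. r i) = 1" "(\<Sum>i<n. r' i) = 1"
    by (simp_all add: r_def r'_def sum.distrib flip: sum_divide_distrib sum_distrib_right)
  moreover have "0 \<le> r i" "0 \<le> r' i" for i
    using s by (simp_all add: r_def r'_def u_def v_def)
  ultimately have "binary_projective_simulable n C"
    unfolding binary_projective_simulable_def C_def using P by blast
  moreover have "antipodal E = (Re (trace E) / 2) *\<^sub>R ((1 - s) *\<^sub>R P + (1 + s) *\<^sub>R (mat 1 - P))"
    by (subst E) (simp add: antipodal_scaleR antipodal_rank_one_combination P)
  then have "(Re (trace E) / 2) *\<^sub>R C i
      = (if i = x then (1/2) *\<^sub>R E else 0) + (if i = y then (1/2) *\<^sub>R antipodal E else 0)" for i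
    using scaleR_binary_mixture[of "Re (trace E)" "u i" s "v i" P "mat 1 - P"] E
    by (simp add: C_def r_def r'_def u_def v_def)
  ultimately show ?thesis by blast
qed

lemma sum_pairs_if_fst_snd:
  fixes X Y :: "nat \<Rightarrow> nat \<Rightarrow> 'a::comm_monoid_add"
  assumes "i < n"
  shows "(\<Sum>j\<in>{..<n} \<times> {..<n}. (if i = fst j then X (fst j) (snd j) else 0)
                              + (if i = snd j then Y (fst j) (snd j) else 0))
       = (\<Sum>y<n. X i y) + (\<Sum>x<n. Y x i)"
proof -
  have "(\<Sum>x<n. \<Sum>y<n. if i = x then X x y else 0) = (\<Sum>x<n. if i = x then \<Sum>y<n. X x y else 0)"
    by (intro sum.cong refl) simp
  moreover have "(\<Sum>j\<in>{..<n} \<times> {..<n}. (if i = fst j then X (fst j) (snd j) else 0)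
                                 + (if i = snd j then Y (fst j) (snd j) else 0))
      = (\<Sum>x<n. \<Sum>y<n. (if i = x then X x y else 0) + (if i = y then Y x y else 0))"
    by (simp add: sum.cartesian_product case_prod_unfold)
  ultimately show ?thesis
    using assms by (simp add: sum.distrib)
qed

lemma projective_simulable_if_jointly_measurable_antipodal:
  assumes "jointly_measurable n A n (\<lambda>i. antipodal (A i))"
  shows "projective_simulable n A"
proof -
  obtain M where psd: "\<forall>a<n. \<forall>b<n. psd (M a b)" and total: "(\<Sum>a<n. \<Sum>b<n. M a b) = mat 1"
    and marg: "\<forall>a<n. (\<Sum>b<n. M a b) = A a" and marg': "\<forall>b<n. (\<Sum>a<n. M a b) = antipodal (A b)"
    using assms unfolding jointly_measurable_def by blast
  define J where "J = {..<n} \<times> {..<n}"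
  define t where "t j = Re (trace (M (fst j) (snd j)))" for j
  have "\<forall>j\<in>J. \<exists>C. binary_projective_simulable n C \<and> (\<forall>i. (t j / 2) *\<^sub>R C i =
      (if i = fst j then (1/2) *\<^sub>R M (fst j) (snd j) else 0)
    + (if i = snd j then (1/2) *\<^sub>R antipodal (M (fst j) (snd j)) else 0))"
    unfolding t_def using psd
    by (intro ballI binary_projective_simulable_antipodal_pair) (auto simp: J_def)
  then obtain C where C: "\<And>j. j \<in> J \<Longrightarrow> binary_projective_simulable n (C j)"
    and C_weighted: "\<And>j i. j \<in> J \<Longrightarrow> (t j / 2) *\<^sub>R C j i =
      (if i = fst j then (1/2) *\<^sub>R M (fst j) (snd j) else 0)
    + (if i = snd j then (1/2) *\<^sub>R antipodal (M (fst j) (snd j)) else 0)"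
    by (rule bchoice[elim_format]) blast
  have "(\<Sum>j\<in>J. t j / 2) = Re (trace (\<Sum>a<n. \<Sum>b<n. M a b)) / 2"
    by (simp add: J_def t_def trace_sum_qop Re_sum sum_divide_distrib sum.cartesian_product case_prod_unfold)
  then have "(\<Sum>j\<in>J. t j / 2) = 1"
    by (simp add: total trace_mat1_qop)
  moreover have "A i = (\<Sum>j\<in>J. (t j / 2) *\<^sub>R C j i)" if "i < n" for i
  proof -
    have "(\<Sum>j\<in>J. (t j / 2) *\<^sub>R C j i)
        = (\<Sum>j\<in>J. (if i = fst j then (1/2) *\<^sub>R M (fst j) (snd j) else 0)
                    + (if i = snd j then (1/2) *\<^sub>R antipodal (M (fst j) (snd j)) else 0))"
      by (intro sum.cong refl) (rule C_weighted)
    also have "\<dots> = (\<Sum>b<n. (1/2) *\<^sub>R M i b) + (\<Sum>a<n. (1/2) *\<^sub>R antipodal (M a i))"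
      unfolding J_def using that by (rule sum_pairs_if_fst_snd)
    also have "\<dots> = A i"
      using marg marg' that by (simp flip: antipodal_sum scaleR_sum_right scaleR_add_left)
    finally show ?thesis by simp
  qed
  moreover have "0 \<le> t j" if "j \<in> J" for j
    using psd that by (auto simp: t_def J_def trace_psd_nonneg)
  ultimately show ?thesis
    using C by (intro projective_simulable_mixture_of_binary[where p = "\<lambda>j. t j / 2"]) auto
qed

theorem theorem1:
  fixes n :: nat and A :: "nat \<Rightarrow> qop"
  assumes "povm n A"
  shows "projective_simulable n A \<longleftrightarrow>
         jointly_measurable n A n (\<lambda>i. antipodal (A i))"
  using jointly_measurable_antipodal_if_projective_simulable
    projective_simulable_if_jointly_measurable_antipodal by blast

end
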